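(* On the half-duplex $(a,b,c)$-relay channel, static QMF achieves the full-duplex DMT $d_{f.d.}(r)=(\min(a,b)-r)^++(c-r)^+$ (and is therefore DMT optimal) in each of the following cases: (i) $c\ge\min(a,b)$ (for all $r\ge 0$); (ii) $c<\min(a,b)$ and $0\le r\le c$. That is, in these cases $d_{QMF}(r)=d_{f.d.}(r)$.
   Context: The $(a,b,c)$-relay channel: source $S$, relay $R$, destination $D$; i.i.d. $\mathcal{CN}(0,1)$ quasi-static gains $h_{sr},h_{rd},h_{sd}$ known only at receivers; average SNRs $\rho^a,\rho^b,\rho^c$ on S-R, R-D, S-D. Exponential orders $\alpha,\beta,\gamma$ of $|h_{sr}|^2\rho^a,|h_{rd}|^2\rho^b,|h_{sd}|^2\rho^c$ (e.g. $\alpha=\lim_{\rho\to\infty}\log(1+|h_{sr}|^2\rho^a)/\log\rho$). The full-duplex DMT is $d_{f.d.}(r)=\min\{a+b+c-\alpha-\beta-\gamma:\min(\max(\alpha,\gamma),\max(\beta,\gamma))\le r,\ \alpha\in[0,a],\beta\in[0,b],\gamma\in[0,c]\}$, an upper bound on the half-duplex DMT. Static QMF (relay listens half the time, quantizes at noise level, maps to a random codeword and transmits in the other half, fixed schedule) has DMT $d_{QMF}(r)=\min\{a+b+c-\alpha-\beta-\gamma: r_{h.d.}(1/2)\le r,\ \alpha\in[0,a],\beta\in[0,b],\gamma\in[0,c]\}$ where $r_{h.d.}(t)=\min\{t\max(\alpha,\gamma)+(1-t)\gamma,\ t\gamma+(1-t)\max(\beta,\gamma)\}$. $x^+=\max(x,0)$.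 *)

theory Defs
  imports Complex_Main
begin

definition pos_part :: "real \<Rightarrow> real" where
  "pos_part x = max x 0"

definition d_fd :: "real \<Rightarrow> real \<Rightarrow> real \<Rightarrow> real \<Rightarrow> real" where
  "d_fd a b c r = Inf {a + b + c - \<alpha> - \<beta> - \<gamma> | \<alpha> \<beta> \<gamma>.
      min (max \<alpha> \<gamma>) (max \<beta> \<gamma>) \<le> r \<and>
      \<alpha> \<in> {0..a} \<and> \<beta> \<in> {0..b} \<and> \<gamma> \<in> {0..c}}"

definition r_hd :: "real \<Rightarrow> real \<Rightarrow> real \<Rightarrow> real \<Rightarrow> real" where
  "r_hd t \<alpha> \<beta> \<gamma> = min (t * max \<alpha> \<gamma> + (1 - t) * \<gamma>) (t * \<gamma> + (1 - t) * max \<beta> \<gamma>)"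

text \<open>DMT of static QMF (relay listens half the time).\<close>
definition d_QMF :: "real \<Rightarrow> real \<Rightarrow> real \<Rightarrow> real \<Rightarrow> real" where
  "d_QMF a b c r = Inf {a + b + c - \<alpha> - \<beta> - \<gamma> | \<alpha> \<beta> \<gamma>.
      r_hd (1/2) \<alpha> \<beta> \<gamma> \<le> r \<and>
      \<alpha> \<in> {0..a} \<and> \<beta> \<in> {0..b} \<and> \<gamma> \<in> {0..c}}"

end

theory Submission
  imports Defs
begin

text \<open>
  The full-duplex DMT is attained at the corner point where the weaker of the links S-R, R-D
  and the direct link S-D are cut down to exponent \<open>min _ r\<close>, and
  every QMF-feasible point is also full-duplex feasible. Hence both infima equal the claimed
  value as soon as it lower-bounds the exponent on the (larger) QMF-feasible set. At
  \<open>t = 1/2\<close> the QMF constraint reads \<open>\<gamma> + max (min \<alpha> \<beta>) \<gamma> \<le> 2 r\<close>; when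
  \<open>\<gamma> < min \<alpha> \<beta>\<close> this only bounds \<open>min \<alpha> \<beta> + \<gamma>\<close> by \<open>2 r\<close> instead of bounding both
  summands by \<open>r\<close>, and the hypothesis on \<open>c\<close> is exactly what makes the weaker bound suffice.
\<close>

lemma r_hd_le_min_max:
  fixes t \<alpha> \<beta> \<gamma> :: real
  assumes "0 \<le> t" "t \<le> 1"
  shows "r_hd t \<alpha> \<beta> \<gamma> \<le> min (max \<alpha> \<gamma>) (max \<beta> \<gamma>)"
proof -
  have "t * max \<alpha> \<gamma> + (1 - t) * \<gamma> \<le> t * max \<alpha> \<gamma> + (1 - t) * max \<alpha> \<gamma>"
   and "t * \<gamma> + (1 - t) * max \<beta> \<gamma> \<le> t * max \<beta> \<gamma> + (1 - t) * max \<beta> \<gamma>"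
    using assms by (simp_all add: mult_left_mono)
  then show ?thesis
    unfolding r_hd_def by (simp add: algebra_simps min.coboundedI1 min.coboundedI2)
qed

lemma r_hd_half: "r_hd (1/2) \<alpha> \<beta> \<gamma> = (\<gamma> + max (min \<alpha> \<beta>) \<gamma>) / 2"
  unfolding r_hd_def by (auto simp: min_def max_def)

lemma sum_le_of_r_hd_half_le:
  fixes a b c r \<alpha> \<beta> \<gamma> :: real
  assumes "c \<ge> min a b \<or> r \<le> c"
    and "r_hd (1/2) \<alpha> \<beta> \<gamma> \<le> r" "\<alpha> \<in> {0..a}" "\<beta> \<in> {0..b}" "\<gamma> \<in> {0..c}"
  shows "\<alpha> + \<beta> + \<gamma> \<le> max a b + min (min a b) r + min c r"
proof -
  have "\<alpha> + \<beta> \<le> max a b + min \<alpha> \<beta>" "min \<alpha> \<beta> \<le> min a b"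
    using assms(3,4) by auto
  moreover have "\<gamma> + max (min \<alpha> \<beta>) \<gamma> \<le> 2 * r"
    using assms(2) by (simp add: r_hd_half)
  ultimately show ?thesis
    using assms(1,5) by (auto simp: min_def max_def split: if_splits)
qed

lemma Inf_exponent_eq_minimum:
  fixes a b c d x y z :: real
  assumes "P x y z" "x \<in> {0..a}" "y \<in> {0..b}" "z \<in> {0..c}" "d = a + b + c - x - y - z"
    and "\<And>\<alpha> \<beta> \<gamma>. P \<alpha> \<beta> \<gamma> \<Longrightarrow> \<alpha> \<in> {0..a} \<Longrightarrow> \<beta> \<in> {0..b} \<Longrightarrow> \<gamma> \<in> {0..c} \<Longrightarrow>
             d \<le> a + b + c - \<alpha> - \<beta> - \<gamma>"
  shows "Inf {a + b + c - \<alpha> - \<beta> - \<gamma> | \<alpha> \<beta> \<gamma>.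
           P \<alpha> \<beta> \<gamma> \<and> \<alpha> \<in> {0..a} \<and> \<beta> \<in> {0..b} \<and> \<gamma> \<in> {0..c}} = d"
  by (rule cInf_eq_minimum) (use assms in blast)+

lemma fd_corner_point:
  fixes a b c r :: real
  assumes "0 \<le> a" "0 \<le> b" "0 \<le> c" "0 \<le> r"
  obtains \<alpha> \<beta> \<gamma> where "min (max \<alpha> \<gamma>) (max \<beta> \<gamma>) \<le> r"
    "\<alpha> \<in> {0..a}" "\<beta> \<in> {0..b}" "\<gamma> \<in> {0..c}"
    "\<alpha> + \<beta> + \<gamma> = max a b + min (min a b) r + min c r"
proof (cases "a \<le> b")
  case True
  have "min (max (min a r) (min c r)) (max b (min c r)) \<le> r"
    by (rule min.coboundedI1) simp
  then show ?thesis
    by (rule that) (use assms True in auto)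
next
  case False
  have "min (max a (min c r)) (max (min b r) (min c r)) \<le> r"
    by (rule min.coboundedI2) simp
  then show ?thesis
    by (rule that) (use assms False in auto)
qed

lemma fd_dmt_closed_form:
  fixes a b c r :: real
  assumes "0 \<le> r"
  shows "a + b + c - (max a b + min (min a b) r + min c r)
         = pos_part (min a b - r) + pos_part (c - r)"
  using assms by (auto simp: pos_part_def min_def max_def)

theorem corollary1:
  fixes a b c r :: real
  assumes "0 \<le> a" and "0 \<le> b" and "0 \<le> c" and "0 \<le> r"
    and "c \<ge> min a b \<or> (c < min a b \<and> r \<le> c)"
  shows "d_fd a b c r = pos_part (min a b - r) + pos_part (c - r)
         \<and> d_QMF a b c r = d_fd a b c r"
proof -
  let ?d = "pos_part (min a b - r) + pos_part (c - r)"
  obtain \<alpha> \<beta> \<gamma> where fd: "min (max \<alpha> \<gamma>) (max \<beta> \<gamma>) \<le> r"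
      and range: "\<alpha> \<in> {0..a}" "\<beta> \<in> {0..b}" "\<gamma> \<in> {0..c}"
      and corner: "\<alpha> + \<beta> + \<gamma> = max a b + min (min a b) r + min c r"
    using fd_corner_point[OF assms(1-4)] .
  have d: "?d = a + b + c - \<alpha> - \<beta> - \<gamma>"
    using fd_dmt_closed_form[of r a b c] assms(4) corner by linarith
  have qmf_of_fd: "r_hd (1/2) x y z \<le> r" if "min (max x z) (max y z) \<le> r" for x y z :: real
    by (rule order_trans[OF r_hd_le_min_max that]) simp_all
  have lower: "?d \<le> a + b + c - x - y - z"
    if "r_hd (1/2) x y z \<le> r" "x \<in> {0..a}" "y \<in> {0..b}" "z \<in> {0..c}" for x y z
    using sum_le_of_r_hd_half_le[of a b c r x y z] assms(5) that
      fd_dmt_closed_form[of r a b c] assms(4) by linarith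
  have "d_fd a b c r = ?d"
    unfolding d_fd_def
    by (rule Inf_exponent_eq_minimum[where P = "\<lambda>x y z. min (max x z) (max y z) \<le> r",
          OF fd range d])
      (use lower qmf_of_fd in blast)
  moreover have "d_QMF a b c r = ?d"
    unfolding d_QMF_def
    by (rule Inf_exponent_eq_minimum[where P = "\<lambda>x y z. r_hd (1/2) x y z \<le> r",
          OF qmf_of_fd[OF fd] range d])
      (use lower in blast)
  ultimately show ?thesis by simp
qed

end
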